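(* Assume $f$ has a unique global maximizer $g$ and the problem contains no weak epistasis. Let $S\subseteq V$ and let $R$ be any assignment with $\mathcal C(R)=V\setminus\big(S\cup\mathcal{IN}(S)\cup\mathcal{IN}^2(S)\big)$. If $\big|\Psi_{\{(\mathcal{IN}(S)\setminus S,\,g)\}\cup R}[s]\big|=1$ for all $s\in S$, then $\psi_s=g[s]$ for all $s\in S$ and all $\psi\in\Psi_{\{(\mathcal{IN}(S)\setminus S,\,g)\}\cup R}$.
   Context: Fix $\ell\ge1$, loci $V=\{0,\dots,\ell-1\}$, chromosomes $\vec y\in\{0,1\}^V$, fitness $f:\{0,1\}^V\to\mathbb R$ (maximized) with unique global maximizer $g$. An assignment $A$ is a set of pairs $(v,a)$ ($v\in V$, $a\in\{0,1\}$) with at most one pair per locus; $A[v]=a$ if $(v,a)\in A$, else $A[v]=*$; coverage $\mathcal C(A)=\{v:A[v]\ne*\}$; for $T\subseteq V$, $\{(T,g)\}=\{(t,g[t]):t\in T\}$. $\Psi_A$ (constrained optima) is the set of chromosomes agreeing with $A$ on $\mathcal C(A)$ with maximum fitness among such chromosomes; $\Psi_A[v]=\{\psi_v:\psi\in\Psi_A\}$. Epistasis: for $v\in V$ and nonempty $S\subseteq V\setminus\{v\}$, $S\Rightarrow v$ iff for every $s\in S$ there exists an assignment $A$ with $\mathcal C(A)=S$ and $\Psi_A[v]\neq\Psi_{A\setminus\{(s,A[s])\}}[v]$; the empty set is never epistatic. An epistasis $S\Rightarrow v$ with $|S|\ge2$ is weak if no nonempty proper subset $T\subsetneq S$ has $T\Rightarrow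 v$; "no weak epistasis" means no epistasis is weak. $\mathcal{IN}(v)=\{u:\{u\}\Rightarrow v\}$, $\mathcal{IN}^2(v)=\{u:\exists w\in\mathcal{IN}(v),\ \{u\}\Rightarrow w\}$, and for $S\subseteq V$, $\mathcal{IN}(S)=\bigcup_{v\in S}\mathcal{IN}(v)$, $\mathcal{IN}^2(S)=\bigcup_{v\in S}\mathcal{IN}^2(v)$. *)

theory Defs
  imports Complex_Main
begin

text \<open>Loci V = {0..<l}. A chromosome is a function nat => bool that is False outside V
 (bool encodes {0,1}).\<close>

definition chroms :: "nat \<Rightarrow> (nat \<Rightarrow> bool) set" where
  "chroms l = {y. \<forall>v. l \<le> v \<longrightarrow> y v = False}"

definition is_assignment :: "nat \<Rightarrow> (nat \<times> bool) set \<Rightarrow> bool" where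
  "is_assignment l A \<longleftrightarrow> (\<forall>(v,a)\<in>A. v < l) \<and> (\<forall>v a b. (v,a) \<in> A \<longrightarrow> (v,b) \<in> A \<longrightarrow> a = b)"

definition cov :: "(nat \<times> bool) set \<Rightarrow> nat set" where
  "cov A = fst ` A"

definition agrees :: "(nat \<Rightarrow> bool) \<Rightarrow> (nat \<times> bool) set \<Rightarrow> bool" where
  "agrees y A \<longleftrightarrow> (\<forall>(v,a)\<in>A. y v = a)"

definition Psi :: "nat \<Rightarrow> ((nat \<Rightarrow> bool) \<Rightarrow> real) \<Rightarrow> (nat \<times> bool) set \<Rightarrow> (nat \<Rightarrow> bool) set" where
  "Psi l f A = {y \<in> chroms l. agrees y A \<and> (\<forall>z \<in> chroms l. agrees z A \<longrightarrow> f z \<le> f y)}"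

definition Psi_at :: "nat \<Rightarrow> ((nat \<Rightarrow> bool) \<Rightarrow> real) \<Rightarrow> (nat \<times> bool) set \<Rightarrow> nat \<Rightarrow> bool set" where
  "Psi_at l f A v = (\<lambda>y. y v) ` Psi l f A"

text \<open>Removing the pair (s, A[s]) from A: remove all pairs with locus s (at most one).\<close>
definition epistatic :: "nat \<Rightarrow> ((nat \<Rightarrow> bool) \<Rightarrow> real) \<Rightarrow> nat set \<Rightarrow> nat \<Rightarrow> bool" where
  "epistatic l f S v \<longleftrightarrow> v < l \<and> S \<noteq> {} \<and> S \<subseteq> {0..<l} - {v} \<and>
     (\<forall>s\<in>S. \<exists>A. is_assignment l A \<and> cov A = S \<and>
        Psi_at l f A v \<noteq> Psi_at l f (A - ({s} \<times> UNIV)) v)"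

definition weak_epistatic :: "nat \<Rightarrow> ((nat \<Rightarrow> bool) \<Rightarrow> real) \<Rightarrow> nat set \<Rightarrow> nat \<Rightarrow> bool" where
  "weak_epistatic l f S v \<longleftrightarrow> epistatic l f S v \<and> 2 \<le> card S \<and>
     \<not> (\<exists>T. T \<noteq> {} \<and> T \<subset> S \<and> epistatic l f T v)"

definition no_weak_epistasis :: "nat \<Rightarrow> ((nat \<Rightarrow> bool) \<Rightarrow> real) \<Rightarrow> bool" where
  "no_weak_epistasis l f \<longleftrightarrow> (\<forall>S v. \<not> weak_epistatic l f S v)"

definition IN1 :: "nat \<Rightarrow> ((nat \<Rightarrow> bool) \<Rightarrow> real) \<Rightarrow> nat \<Rightarrow> nat set" where
  "IN1 l f v = {u. epistatic l f {u} v}"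

definition IN2 :: "nat \<Rightarrow> ((nat \<Rightarrow> bool) \<Rightarrow> real) \<Rightarrow> nat \<Rightarrow> nat set" where
  "IN2 l f v = {u. \<exists>w \<in> IN1 l f v. epistatic l f {u} w}"

definition INs :: "nat \<Rightarrow> ((nat \<Rightarrow> bool) \<Rightarrow> real) \<Rightarrow> nat set \<Rightarrow> nat set" where
  "INs l f S = (\<Union>v\<in>S. IN1 l f v)"

definition IN2s :: "nat \<Rightarrow> ((nat \<Rightarrow> bool) \<Rightarrow> real) \<Rightarrow> nat set \<Rightarrow> nat set" where
  "IN2s l f S = (\<Union>v\<in>S. IN2 l f v)"

definition gassign :: "nat set \<Rightarrow> (nat \<Rightarrow> bool) \<Rightarrow> (nat \<times> bool) set" where
  "gassign T g = {(t, g t) | t. t \<in> T}"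

definition unique_global_max :: "nat \<Rightarrow> ((nat \<Rightarrow> bool) \<Rightarrow> real) \<Rightarrow> (nat \<Rightarrow> bool) \<Rightarrow> bool" where
  "unique_global_max l f g \<longleftrightarrow> g \<in> chroms l \<and> (\<forall>y \<in> chroms l. y \<noteq> g \<longrightarrow> f y < f g)"

end

theory Submission
  imports Defs
begin

text \<open>If an assignment A leaves a locus v and all of IN(v) free, every constrained optimum
  of A carries g at v: otherwise, by induction on A, the loci of a minimal such A form an
  epistasis on v, and without weak epistasis this contains a single epistatic locus, i.e. an
  element of IN(v). R leaves S, IN(S) and IN(IN(S)) free, so the optima of R carry g on
  S and on IN(S) - S; fixing the latter to g therefore does not change the optima.\<close>

lemma Psi_empty_eq_global_max:
  assumes "unique_global_max l f g"
  shows "Psi l f {} = {g}"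
  using assms unfolding Psi_def unique_global_max_def agrees_def
  by (force simp: less_le)

lemma finite_chroms: "finite (chroms l)"
proof -
  have "inj_on (\<lambda>y. {v. y v}) (chroms l)"
    by (rule inj_onI) (auto simp: fun_eq_iff)
  moreover have "(\<lambda>y. {v. y v}) ` chroms l \<subseteq> Pow {0..<l}"
    unfolding chroms_def by (auto simp: not_le[symmetric])
  ultimately show ?thesis
    by (meson finite_Pow_iff finite_atLeastLessThan finite_imageD finite_subset)
qed

lemma Psi_nonempty:
  assumes "is_assignment l A"
  shows "Psi l f A \<noteq> {}"
proof -
  define C where "C = {y \<in> chroms l. agrees y A}"
  have "(\<lambda>v. (v, True) \<in> A) \<in> C"
    using assms unfolding C_def chroms_def agrees_def is_assignment_def
    by (auto; metis (full_types) not_le)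
  moreover have "finite C"
    unfolding C_def using finite_chroms by auto
  ultimately have "finite (f ` C)" "Max (f ` C) \<in> f ` C"
    by (auto intro!: Max_in)
  then obtain y where "y \<in> C" "f y = Max (f ` C)"
    by (metis imageE)
  with \<open>finite (f ` C)\<close> have "\<forall>z\<in>C. f z \<le> f y"
    by simp
  with \<open>y \<in> C\<close> have "y \<in> Psi l f A"
    unfolding C_def Psi_def by auto
  then show ?thesis
    by blast
qed

lemma agrees_Un: "agrees y (B \<union> A) \<longleftrightarrow> agrees y B \<and> agrees y A"
  unfolding agrees_def by blast

lemma Psi_Un_subset:
  assumes "\<phi> \<in> Psi l f A" and "agrees \<phi> B"
  shows "Psi l f (B \<union> A) \<subseteq> Psi l f A"
proof
  fix \<psi> assume "\<psi> \<in> Psi l f (B \<union> A)"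
  then have \<psi>: "\<psi> \<in> chroms l" "agrees \<psi> A"
    "\<And>z. z \<in> chroms l \<Longrightarrow> agrees z (B \<union> A) \<Longrightarrow> f z \<le> f \<psi>"
    unfolding Psi_def agrees_Un by auto
  have \<phi>: "\<phi> \<in> chroms l" "agrees \<phi> A"
    "\<And>z. z \<in> chroms l \<Longrightarrow> agrees z A \<Longrightarrow> f z \<le> f \<phi>"
    using assms(1) unfolding Psi_def by auto
  have "f \<phi> \<le> f \<psi>"
    using \<phi>(1,2) assms(2) by (intro \<psi>(3)) (simp_all add: agrees_Un)
  with \<phi>(3) \<psi>(1,2) show "\<psi> \<in> Psi l f A"
    unfolding Psi_def by force
qed

lemma finite_assignment:
  assumes "is_assignment l A"
  shows "finite A"
proof -
  have "A \<subseteq> {0..<l} \<times> UNIV"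
    using assms unfolding is_assignment_def by auto
  then show ?thesis
    by (rule finite_subset) simp
qed

lemma epistatic_imp_IN1:
  assumes "no_weak_epistasis l f" and "epistatic l f T v"
  shows "\<exists>t\<in>T. t \<in> IN1 l f v"
  using assms(2)
proof (induction "card T" arbitrary: T rule: less_induct)
  case less
  have "finite T"
    using less.prems unfolding epistatic_def
    by (meson finite_atLeastLessThan finite_subset Diff_subset subset_trans)
  show ?case
  proof (cases "2 \<le> card T")
    case True
    with less.prems assms(1) obtain T' where "T' \<subset> T" "epistatic l f T' v"
      unfolding no_weak_epistasis_def weak_epistatic_def by blast
    moreover from \<open>T' \<subset> T\<close> \<open>finite T\<close> have "card T' < card T"
      by (rule psubset_card_mono[rotated])
    ultimately show ?thesis
      using less.hyps by blast
  next
    case False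
    moreover have "T \<noteq> {}"
      using less.prems unfolding epistatic_def by blast
    ultimately have "card T = 1"
      using \<open>finite T\<close> card_gt_0_iff[of T] by linarith
    then obtain t where "T = {t}"
      by (rule card_1_singletonE)
    with less.prems show ?thesis
      unfolding IN1_def by blast
  qed
qed

lemma Psi_at_eq_global_max:
  assumes "unique_global_max l f g" and "no_weak_epistasis l f"
    and "is_assignment l A" and "v < l" and "v \<notin> cov A"
    and "IN1 l f v \<inter> cov A = {}"
  shows "Psi_at l f A v = {g v}"
  using assms(3-6)
proof (induction "card A" arbitrary: A rule: less_induct)
  case less
  show ?case
  proof (rule ccontr)
    assume not_g: "Psi_at l f A v \<noteq> {g v}"
    have "A \<noteq> {}"
    proof
      assume "A = {}"
      then have "Psi_at l f A v = {g v}"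
        by (simp add: Psi_at_def Psi_empty_eq_global_max[OF assms(1)])
      with not_g show False ..
    qed
    have "epistatic l f (cov A) v"
      unfolding epistatic_def
    proof (intro conjI ballI)
      show "cov A \<noteq> {}"
        using \<open>A \<noteq> {}\<close> unfolding cov_def by blast
      show "cov A \<subseteq> {0..<l} - {v}"
        using less.prems unfolding is_assignment_def cov_def by auto
    next
      fix s assume "s \<in> cov A"
      define A' where "A' = A - ({s} \<times> UNIV)"
      have "A' \<subset> A"
        using \<open>s \<in> cov A\<close> unfolding A'_def cov_def by force
      then have "card A' < card A"
        using finite_assignment[OF less.prems(1)] by (rule psubset_card_mono[rotated])
      moreover have "is_assignment l A'" "cov A' \<subseteq> cov A"
        using less.prems(1) unfolding A'_def is_assignment_def cov_def by auto
      ultimately have "Psi_at l f A' v = {g v}"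
        using less.hyps less.prems by blast
      with not_g less.prems(1) show "\<exists>B. is_assignment l B \<and> cov B = cov A \<and>
          Psi_at l f B v \<noteq> Psi_at l f (B - ({s} \<times> UNIV)) v"
        unfolding A'_def by auto
    qed (use less.prems in auto)
    then show False
      using epistatic_imp_IN1[OF assms(2)] less.prems(4) by blast
  qed
qed

theorem corollary2:
  fixes l :: nat and f :: "(nat \<Rightarrow> bool) \<Rightarrow> real" and g :: "nat \<Rightarrow> bool"
    and S :: "nat set" and R :: "(nat \<times> bool) set"
  assumes "1 \<le> l"
    and "unique_global_max l f g"
    and "no_weak_epistasis l f"
    and "S \<subseteq> {0..<l}"
    and "is_assignment l R"
    and "cov R = {0..<l} - (S \<union> INs l f S \<union> IN2s l f S)"
    and "\<forall>s\<in>S. card (Psi_at l f (gassign (INs l f S - S) g \<union> R) s) = 1"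
  shows "\<forall>s\<in>S. \<forall>\<psi>\<in>Psi l f (gassign (INs l f S - S) g \<union> R). \<psi> s = g s"
proof -
  have optimum_at: "Psi_at l f R v = {g v}" if "v \<in> S \<union> INs l f S" for v
  proof (rule Psi_at_eq_global_max[OF assms(2,3,5)])
    have "v < l"
      using that assms(4) unfolding INs_def IN1_def epistatic_def by auto
    moreover have "IN1 l f v \<subseteq> INs l f S \<union> IN2s l f S"
      using that unfolding INs_def IN2s_def IN2_def IN1_def by auto
    ultimately show "v < l" "v \<notin> cov R" "IN1 l f v \<inter> cov R = {}"
      using that assms(6) by auto
  qed
  obtain \<phi> where \<phi>: "\<phi> \<in> Psi l f R"
    using Psi_nonempty[OF assms(5)] by blast
  have "agrees \<phi> (gassign (INs l f S - S) g)"
    unfolding agrees_def gassign_def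
  proof clarify
    fix t assume "t \<in> INs l f S" "t \<notin> S"
    then show "\<phi> t = g t"
      using \<phi> optimum_at[of t] unfolding Psi_at_def by blast
  qed
  then have Psi_sub: "Psi l f (gassign (INs l f S - S) g \<union> R) \<subseteq> Psi l f R"
    by (rule Psi_Un_subset[OF \<phi>])
  show ?thesis
  proof (intro ballI)
    fix s \<psi> assume "s \<in> S" "\<psi> \<in> Psi l f (gassign (INs l f S - S) g \<union> R)"
    with Psi_sub show "\<psi> s = g s"
      using optimum_at[of s] unfolding Psi_at_def by blast
  qed
qed

end
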